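(* Let $\Gamma\subseteq\mathbb{R}$ be the value group of a field $\mathcal{K}$ with a nontrivial valuation. For any function $w:2^{[n]}\to\mathbb{R}$ there exist $\lambda=(\lambda_0,\dots,\lambda_n)\in\Gamma^{n+1}$ such that the function $\lambda\cdot w$, $(\lambda\cdot w)(S)=\lambda_{|S|}+w(S)$, is strictly submodular. Moreover, if $w$ is submodular and $\Gamma$ is dense in $\mathbb{R}$, then such $\lambda$ can be chosen arbitrarily small.
   Context: $\Gamma=\mathrm{val}(\mathcal{K}^* )$, a nontrivial additive subgroup of $\mathbb{R}$. A function $F:2^{[n]}\to\mathbb{R}$ is submodular if $F(S\cap T)+F(S\cup T)\le F(S)+F(T)$ for all $S,T\subseteq[n]$, and strictly submodular if $F(S)+F(S\cup\{i,j\})<F(S\cup\{i\})+F(S\cup\{j\})$ for all $S\subseteq[n]$ and distinct $i,j\in[n]\setminus S$. *)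

theory Defs
  imports "HOL-Analysis.Analysis"
begin

text \<open>Ground set [n] = {1..n}; set functions are functions on nat sets, only their
values on subsets of {1..n} matter.\<close>

definition submodular_on :: "nat \<Rightarrow> (nat set \<Rightarrow> real) \<Rightarrow> bool" where
  "submodular_on n F \<longleftrightarrow>
     (\<forall>S T. S \<subseteq> {1..n} \<longrightarrow> T \<subseteq> {1..n} \<longrightarrow> F (S \<inter> T) + F (S \<union> T) \<le> F S + F T)"

definition strictly_submodular_on :: "nat \<Rightarrow> (nat set \<Rightarrow> real) \<Rightarrow> bool" where
  "strictly_submodular_on n F \<longleftrightarrow>
     (\<forall>S i j. S \<subseteq> {1..n} \<longrightarrow> i \<in> {1..n} - S \<longrightarrow> j \<in> {1..n} - S \<longrightarrow> i \<noteq> j \<longrightarrow>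
        F S + F (S \<union> {i, j}) < F (S \<union> {i}) + F (S \<union> {j}))"

definition lam_act :: "(nat \<Rightarrow> real) \<Rightarrow> (nat set \<Rightarrow> real) \<Rightarrow> nat set \<Rightarrow> real" where
  "lam_act lam w S = lam (card S) + w S"

definition additive_subgroup :: "real set \<Rightarrow> bool" where
  "additive_subgroup G \<longleftrightarrow> 0 \<in> G \<and> (\<forall>x\<in>G. \<forall>y\<in>G. x + y \<in> G) \<and> (\<forall>x\<in>G. - x \<in> G)"

end

theory Submission
  imports Defs
begin

text \<open>Adding the concave quadratic \<open>\<lambda>\<^sub>k = -c k\<^sup>2\<close> lowers every second difference
  \<open>F S + F (S \<union> {i,j}) - F (S \<union> {i}) - F (S \<union> {j})\<close> by the same amount \<open>2c\<close>.
  Since \<open>[n]\<close> is finite, the second differences of \<open>w\<close> are bounded, so any \<open>c > 0\<close> large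
  enough works, and \<open>c\<close> may be taken as a multiple of a positive element of \<open>\<Gamma>\<close>. If \<open>w\<close> is
  submodular its second differences are already \<open>\<le> 0\<close>, so every \<open>c > 0\<close> works; density of
  \<open>\<Gamma>\<close> then allows \<open>c\<close> so small that all \<open>\<lambda>\<^sub>k\<close>, \<open>k \<le> n\<close>, are below \<open>\<epsilon>\<close>.\<close>

definition second_diff :: "(nat set \<Rightarrow> real) \<Rightarrow> nat set \<Rightarrow> nat \<Rightarrow> nat \<Rightarrow> real" where
  "second_diff F S i j = F S + F (S \<union> {i, j}) - F (S \<union> {i}) - F (S \<union> {j})"

lemma second_diff_neg_iff:
  "second_diff F S i j < 0 \<longleftrightarrow> F S + F (S \<union> {i, j}) < F (S \<union> {i}) + F (S \<union> {j})"
  unfolding second_diff_def by linarith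

lemma second_diff_lam_act_square:
  assumes "finite S" "i \<notin> S" "j \<notin> S" "i \<noteq> j"
  shows "second_diff (lam_act (\<lambda>k. - (real (k\<^sup>2) * c)) w) S i j = second_diff w S i j - 2 * c"
proof -
  have "card (S \<union> {i}) = card S + 1" "card (S \<union> {j}) = card S + 1"
       "card (S \<union> {i, j}) = card S + 2"
    using assms by auto
  then show ?thesis
    unfolding second_diff_def lam_act_def by (simp add: power2_eq_square algebra_simps)
qed

lemma strictly_submodular_on_lam_act_square:
  assumes "\<And>S i j. S \<subseteq> {1..n} \<Longrightarrow> i \<in> {1..n} - S \<Longrightarrow> j \<in> {1..n} - S \<Longrightarrow> i \<noteq> j \<Longrightarrow>
             second_diff w S i j < 2 * c"
  shows "strictly_submodular_on n (lam_act (\<lambda>k. - (real (k\<^sup>2) * c)) w)"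
  unfolding strictly_submodular_on_def second_diff_neg_iff[symmetric]
proof (intro allI impI)
  fix S i j
  assume S: "S \<subseteq> {1..n}" and ij: "i \<in> {1..n} - S" "j \<in> {1..n} - S" "i \<noteq> j"
  have "finite S" using S finite_subset by blast
  with ij have "second_diff (lam_act (\<lambda>k. - (real (k\<^sup>2) * c)) w) S i j = second_diff w S i j - 2 * c"
    by (intro second_diff_lam_act_square) auto
  with assms[OF S ij] show "second_diff (lam_act (\<lambda>k. - (real (k\<^sup>2) * c)) w) S i j < 0"
    by simp
qed

lemma second_diff_bounded:
  "\<exists>B. \<forall>S \<subseteq> {1..n}. \<forall>i \<in> {1..n}. \<forall>j \<in> {1..n}. second_diff w S i j \<le> B"
proof (intro exI ballI allI impI)
  let ?D = "(\<lambda>(S, i, j). second_diff w S i j) ` (Pow {1..n} \<times> {1..n} \<times> {1..n})"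
  fix S i j assume "S \<subseteq> {1..n}" "i \<in> {1..n}" "j \<in> {1..n}"
  then have "second_diff w S i j \<in> ?D" by (intro image_eqI[of _ _ "(S, i, j)"]) auto
  then show "second_diff w S i j \<le> Max ?D" by (simp add: Max_ge)
qed

lemma submodular_on_second_diff_nonpos:
  assumes "submodular_on n w" "S \<subseteq> {1..n}" "i \<in> {1..n} - S" "j \<in> {1..n} - S" "i \<noteq> j"
  shows "second_diff w S i j \<le> 0"
proof -
  have "S \<union> {i} \<subseteq> {1..n}" "S \<union> {j} \<subseteq> {1..n}" using assms by auto
  with assms(1) have "w ((S \<union> {i}) \<inter> (S \<union> {j})) + w ((S \<union> {i}) \<union> (S \<union> {j}))
                        \<le> w (S \<union> {i}) + w (S \<union> {j})"
    unfolding submodular_on_def by blast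
  moreover have "(S \<union> {i}) \<inter> (S \<union> {j}) = S" "(S \<union> {i}) \<union> (S \<union> {j}) = S \<union> {i, j}"
    using assms by auto
  ultimately show ?thesis unfolding second_diff_def by simp
qed

lemma additive_subgroup_of_nat_mult:
  assumes "additive_subgroup G" "g \<in> G"
  shows "real N * g \<in> G"
proof (induction N)
  case 0
  then show ?case using assms by (simp add: additive_subgroup_def)
next
  case (Suc N)
  have "real (Suc N) * g = real N * g + g" by (simp add: algebra_simps)
  then show ?case using Suc assms by (simp add: additive_subgroup_def)
qed

lemma additive_subgroup_neg_of_nat_mult:
  assumes "additive_subgroup G" "g \<in> G"
  shows "- (real N * g) \<in> G"
  using additive_subgroup_of_nat_mult[OF assms] assms(1) by (simp add: additive_subgroup_def)

lemma additive_subgroup_obtain_pos: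
  assumes "additive_subgroup G" "G \<noteq> {0}"
  obtains g where "g \<in> G" "g > 0"
proof -
  obtain x where "x \<in> G" "x \<noteq> 0" using assms by (auto simp: additive_subgroup_def)
  with assms(1) have "\<bar>x\<bar> \<in> G" "\<bar>x\<bar> > 0" by (auto simp: additive_subgroup_def abs_if)
  then show ?thesis using that by blast
qed

lemma dense_obtain_pos_less:
  assumes "closure G = UNIV" "(\<delta> :: real) > 0"
  obtains g where "g \<in> G" "0 < g" "g < \<delta>"
proof -
  have "\<delta> / 2 \<in> closure G" using assms(1) by simp
  then obtain g where "g \<in> G" "dist g (\<delta> / 2) < \<delta> / 2"
    using assms(2) unfolding closure_approachable by (meson half_gt_zero)
  moreover from this(2) have "0 < g" "g < \<delta>"
    unfolding dist_real_def abs_less_iff by linarith+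
  ultimately show ?thesis using that by blast
qed

lemma ex_strictly_submodular_lam_act:
  assumes "additive_subgroup \<Gamma>" "\<Gamma> \<noteq> {0}"
  shows "\<exists>lam. (\<forall>k. lam k \<in> \<Gamma>) \<and> strictly_submodular_on n (lam_act lam w)"
proof -
  obtain g where g: "g \<in> \<Gamma>" "g > 0" using additive_subgroup_obtain_pos[OF assms] .
  obtain B where B: "\<forall>S \<subseteq> {1..n}. \<forall>i \<in> {1..n}. \<forall>j \<in> {1..n}. second_diff w S i j \<le> B"
    using second_diff_bounded by blast
  obtain m :: nat where "B / (2 * g) < real m" using reals_Archimedean2 by blast
  with g(2) have "B < 2 * (real m * g)"
    by (simp add: pos_divide_less_eq mult.commute mult.left_commute)
  define lam :: "nat \<Rightarrow> real" where "lam = (\<lambda>k. - (real (k\<^sup>2) * (real m * g)))"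
  have "strictly_submodular_on n (lam_act lam w)"
    unfolding lam_def
  proof (rule strictly_submodular_on_lam_act_square)
    fix S i j assume "S \<subseteq> {1..n}" "i \<in> {1..n} - S" "j \<in> {1..n} - S"
    with B have "second_diff w S i j \<le> B" by blast
    with \<open>B < 2 * (real m * g)\<close> show "second_diff w S i j < 2 * (real m * g)"
      by linarith
  qed
  moreover have "lam k \<in> \<Gamma>" for k
    unfolding lam_def using assms(1) additive_subgroup_of_nat_mult[OF assms(1) g(1)]
    by (rule additive_subgroup_neg_of_nat_mult)
  ultimately show ?thesis by blast
qed

lemma ex_small_strictly_submodular_lam_act:
  assumes "additive_subgroup \<Gamma>" "closure \<Gamma> = UNIV" "submodular_on n w" "\<epsilon> > 0"
  shows "\<exists>lam. (\<forall>k\<le>n. lam k \<in> \<Gamma> \<and> \<bar>lam k\<bar> < \<epsilon>) \<and> strictly_submodular_on n (lam_act lam w)"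
proof -
  have N: "real (n\<^sup>2) + 1 > 0" by (simp add: add_nonneg_pos)
  with \<open>\<epsilon> > 0\<close> have "\<epsilon> / (real (n\<^sup>2) + 1) > 0" by simp
  then obtain g where g: "g \<in> \<Gamma>" "0 < g" "g < \<epsilon> / (real (n\<^sup>2) + 1)"
    using dense_obtain_pos_less[OF assms(2)] by blast
  define lam :: "nat \<Rightarrow> real" where "lam = (\<lambda>k. - (real (k\<^sup>2) * g))"
  have "\<bar>lam k\<bar> < \<epsilon>" if "k \<le> n" for k
  proof -
    have "\<bar>lam k\<bar> \<le> real (n\<^sup>2) * g" unfolding lam_def using that g(2) by (simp add: power_mono)
    also have "\<dots> < (real (n\<^sup>2) + 1) * g" using g(2) by simp
    also have "\<dots> < \<epsilon>" using g(3) N by (simp add: pos_less_divide_eq mult.commute)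
    finally show ?thesis .
  qed
  moreover have "lam k \<in> \<Gamma>" for k
    unfolding lam_def using assms(1) g(1) by (rule additive_subgroup_neg_of_nat_mult)
  moreover have "strictly_submodular_on n (lam_act lam w)"
    unfolding lam_def
  proof (rule strictly_submodular_on_lam_act_square)
    fix S i j assume "S \<subseteq> {1..n}" "i \<in> {1..n} - S" "j \<in> {1..n} - S" "i \<noteq> j"
    with assms(3) have "second_diff w S i j \<le> 0" by (rule submodular_on_second_diff_nonpos)
    with g(2) show "second_diff w S i j < 2 * g" by linarith
  qed
  ultimately show ?thesis by blast
qed

theorem lemma3p1:
  fixes \<Gamma> :: "real set" and n :: nat and w :: "nat set \<Rightarrow> real"
  assumes "additive_subgroup \<Gamma>" and "\<Gamma> \<noteq> {0}"
  shows "(\<exists>lam :: nat \<Rightarrow> real. (\<forall>k\<le>n. lam k \<in> \<Gamma>) \<and> strictly_submodular_on n (lam_act lam w))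
     \<and> (submodular_on n w \<and> closure \<Gamma> = UNIV \<longrightarrow>
          (\<forall>\<epsilon>>0. \<exists>lam :: nat \<Rightarrow> real. (\<forall>k\<le>n. lam k \<in> \<Gamma> \<and> \<bar>lam k\<bar> < \<epsilon>)
               \<and> strictly_submodular_on n (lam_act lam w)))"
proof (intro conjI impI allI)
  show "\<exists>lam. (\<forall>k\<le>n. lam k \<in> \<Gamma>) \<and> strictly_submodular_on n (lam_act lam w)"
    using ex_strictly_submodular_lam_act[OF assms] by blast
next
  fix \<epsilon> :: real
  assume "submodular_on n w \<and> closure \<Gamma> = UNIV" and "\<epsilon> > 0"
  then show "\<exists>lam. (\<forall>k\<le>n. lam k \<in> \<Gamma> \<and> \<bar>lam k\<bar> < \<epsilon>) \<and> strictly_submodular_on n (lam_act lam w)"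
    using ex_small_strictly_submodular_lam_act[OF assms(1)] by blast
qed

end
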